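(* For any real continuous function $f\in C(\Omega)$, $$|f-f\circ\sigma|_\infty=|Kf-f|_\infty\ \ge\ \|[\mathcal D,\pi(M_f)]\|\ \ge\ |f-Lf|_\infty.$$ Moreover, if $f$ does not depend on the first coordinate (i.e. $f(x)=f(y)$ whenever $x_i=y_i$ for all $i\ge2$), both inequalities are equalities.
   Context: $\Omega=\{0,1\}^{\mathbb N}$ with the shift $\sigma$; for $a\in\{0,1\}$, $ax=(a,x_1,\dots)$. $\mu$ is the measure of maximal entropy (uniform Bernoulli product measure), $L^2(\mu)$ the Hilbert space of square-integrable functions. $|\cdot|_\infty$ is the supremum norm. Ruelle operator $L\phi(x)=\frac12(\phi(0x)+\phi(1x))$; Koopman operator $K\phi=\phi\circ\sigma$. For $f\in C(\Omega)$, $M_f$ is the multiplication operator $g\mapsto fg$ on $L^2(\mu)$. On $\mathcal H=L^2(\mu)\times L^2(\mu)$ (norm $|(\phi_1,\phi_2)|^2=|\phi_1|^2+|\phi_2|^2$), $\mathcal D=\begin{pmatrix}0&K\\ L&0\end{pmatrix}$ and $\pi(A)=\begin{pmatrix}A&0\\0&A\end{pmatrix}$; $[\mathcal D,\pi(A)]=\mathcal D\pi(A)-\pi(A)\mathcal D$. $\|\cdot\|$ is the operator norm. *)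

theory Defs
  imports "HOL-Probability.Probability"
begin

text \<open>The full one-sided shift space Omega = {0,1}^N, represented as nat => bool
  (coordinate x_1 of the paper is index 0; the symbol 0 is False, 1 is True).\<close>

type_synonym omega = "nat \<Rightarrow> bool"

definition OmegaTop :: "omega topology" where
  "OmegaTop = product_topology (\<lambda>_. discrete_topology (UNIV :: bool set)) UNIV"

definition shift :: "omega \<Rightarrow> omega" where
  "shift x = (\<lambda>n. x (Suc n))"

definition cons_sym :: "bool \<Rightarrow> omega \<Rightarrow> omega" where
  "cons_sym a x = (\<lambda>n. case n of 0 \<Rightarrow> a | Suc m \<Rightarrow> x m)"

definition mu :: "omega measure" where
  "mu = PiM UNIV (\<lambda>_::nat. measure_pmf (bernoulli_pmf (1/2)))"

definition supn :: "(omega \<Rightarrow> real) \<Rightarrow> real" where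
  "supn g = (SUP x. \<bar>g x\<bar>)"

definition Koop :: "(omega \<Rightarrow> 'a) \<Rightarrow> omega \<Rightarrow> 'a" where
  "Koop \<phi> = \<phi> \<circ> shift"

definition Ruelle :: "(omega \<Rightarrow> 'a::field) \<Rightarrow> omega \<Rightarrow> 'a" where
  "Ruelle \<phi> x = (\<phi> (cons_sym False x) + \<phi> (cons_sym True x)) / 2"

text \<open>Complex L^2(mu), represented by square-integrable measurable representatives.\<close>
type_synonym l2 = "omega \<Rightarrow> complex"

definition L2 :: "l2 set" where
  "L2 = {\<phi>. \<phi> \<in> borel_measurable mu \<and> integrable mu (\<lambda>x. (cmod (\<phi> x))\<^sup>2)}"

definition L2norm :: "l2 \<Rightarrow> real" where
  "L2norm \<phi> = sqrt (\<integral>x. (cmod (\<phi> x))\<^sup>2 \<partial>mu)"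

definition Mult :: "(omega \<Rightarrow> real) \<Rightarrow> l2 \<Rightarrow> l2" where
  "Mult f \<phi> = (\<lambda>x. complex_of_real (f x) * \<phi> x)"

type_synonym hvec = "l2 \<times> l2"

definition Hspace :: "hvec set" where
  "Hspace = L2 \<times> L2"

definition Hnorm :: "hvec \<Rightarrow> real" where
  "Hnorm v = sqrt ((L2norm (fst v))\<^sup>2 + (L2norm (snd v))\<^sup>2)"

definition Dirac :: "hvec \<Rightarrow> hvec" where
  "Dirac v = (Koop (snd v), Ruelle (fst v))"

definition piop :: "(l2 \<Rightarrow> l2) \<Rightarrow> hvec \<Rightarrow> hvec" where
  "piop A v = (A (fst v), A (snd v))"

definition commut :: "(hvec \<Rightarrow> hvec) \<Rightarrow> (hvec \<Rightarrow> hvec) \<Rightarrow> hvec \<Rightarrow> hvec" where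
  "commut D P v = (\<lambda>x. fst (D (P v)) x - fst (P (D v)) x,
                   \<lambda>x. snd (D (P v)) x - snd (P (D v)) x)"

definition opnorm :: "(hvec \<Rightarrow> hvec) \<Rightarrow> real" where
  "opnorm T = (SUP v \<in> {v \<in> Hspace. Hnorm v \<le> 1}. Hnorm (T v))"

end

theory Submission
  imports Defs
begin

(* The commutator acts by (p, q) |-> ((f o sigma - f) Kq, x |-> L((f - f(x)) p)(x)). The measure mu
   is invariant under the shift and under the Ruelle operator (the integral of L g is that of g), and
   L is an average, so Cauchy-Schwarz bounds both components by |Kf - f|_inf times the norm of (p, q).
   On test vectors (K u, 0) the commutator is (0, (Lf - f) u); taking for u a normalized indicator of
   a cylinder on which the continuous function |Lf - f| stays close to its value at a given point
   gives the lower bound |f - Lf|_inf. If f ignores the first coordinate then (Lf) o sigma = f, so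
   Kf - f = (Lf - f) o sigma, and sigma is onto. *)

abbreviation coin :: "bool measure" where
  "coin \<equiv> measure_pmf (bernoulli_pmf (1/2))"

interpretation coins: sequence_space coin
  by unfold_locales

lemma mu_eq_coins: "mu = coins.S"
  by (simp add: mu_def)

lemma space_mu [simp]: "space mu = UNIV"
  by (simp add: mu_def space_PiM)

lemma prob_space_mu: "prob_space mu"
  unfolding mu_eq_coins by (rule coins.P.prob_space_axioms)

lemma cons_sym_eq_case_nat: "cons_sym a x = case_nat a x"
  by (simp add: cons_sym_def fun_eq_iff split: nat.split)

lemma shift_cons_sym [simp]: "shift (cons_sym a x) = x"
  by (simp add: shift_def cons_sym_def)

lemma measurable_cons_sym [measurable]: "cons_sym a \<in> measurable mu mu"
  unfolding cons_sym_eq_case_nat mu_eq_coins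
  by (intro measurable_PiM_single') (auto split: nat.split simp: space_PiM)

lemma measurable_shift [measurable]: "shift \<in> measurable mu mu"
  unfolding shift_def mu_eq_coins
  by (intro measurable_PiM_single') (auto simp: space_PiM)

lemma nn_integral_mu_cons_sym:
  assumes [measurable]: "g \<in> borel_measurable mu"
  shows "(\<integral>\<^sup>+y. g y \<partial>mu) = (\<integral>\<^sup>+x. (\<integral>\<^sup>+a. g (cons_sym a x) \<partial>coin) \<partial>mu)"
proof -
  interpret pair_sigma_finite coin coins.S ..
  have [measurable]: "g \<in> borel_measurable coins.S"
    using mu_eq_coins by simp
  have "(\<integral>\<^sup>+y. g y \<partial>mu) = (\<integral>\<^sup>+z. g (case_prod case_nat z) \<partial>(coin \<Otimes>\<^sub>M coins.S))"
    unfolding mu_eq_coins by (subst coins.PiM_iter[symmetric]) (simp add: nn_integral_distr)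
  also have "\<dots> = (\<integral>\<^sup>+x. (\<integral>\<^sup>+a. g (case_nat a x) \<partial>coin) \<partial>coins.S)"
    by (subst nn_integral_snd[symmetric]) simp_all
  finally show ?thesis
    by (simp add: cons_sym_eq_case_nat mu_eq_coins)
qed

lemma nn_integral_mu_shift:
  assumes [measurable]: "g \<in> borel_measurable mu"
  shows "(\<integral>\<^sup>+y. g (shift y) \<partial>mu) = (\<integral>\<^sup>+y. g y \<partial>mu)"
  by (subst nn_integral_mu_cons_sym) (simp_all add: measure_pmf.emeasure_space_1)

lemma nn_integral_mu_Ruelle:
  fixes g :: "omega \<Rightarrow> real"
  assumes [measurable]: "g \<in> borel_measurable mu" and nonneg: "\<And>x. 0 \<le> g x"
  shows "(\<integral>\<^sup>+x. ennreal (Ruelle g x) \<partial>mu) = (\<integral>\<^sup>+y. ennreal (g y) \<partial>mu)"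
proof -
  have "(\<integral>\<^sup>+a. ennreal (g (cons_sym a x)) \<partial>coin) = ennreal (Ruelle g x)" for x
    using nonneg[of "cons_sym False x"] nonneg[of "cons_sym True x"]
    by (simp add: nn_integral_measure_pmf_finite UNIV_bool Ruelle_def add_divide_distrib
        ennreal_divide_numeral[symmetric] divide_ennreal_def)
  then show ?thesis
    by (simp add: nn_integral_mu_cons_sym)
qed

definition cyl :: "nat \<Rightarrow> omega \<Rightarrow> omega set" where
  "cyl n x = {y. \<forall>i<n. y i = x i}"

lemma cyl_eq_prod_emb: "cyl n x = prod_emb UNIV (\<lambda>_. coin) {..<n} (Pi\<^sub>E {..<n} (\<lambda>i. {x i}))"
  by (auto simp: cyl_def prod_emb_iff PiE_iff extensional_UNIV)

lemma sets_cyl [measurable]: "cyl n x \<in> sets mu"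
  unfolding cyl_eq_prod_emb mu_def by (intro sets_PiM_I) auto

lemma emeasure_cyl: "emeasure mu (cyl n x) = ennreal ((1/2)^n)"
proof -
  have "emeasure mu (cyl n x) = (\<Prod>i<n. emeasure coin {x i})"
    unfolding cyl_eq_prod_emb mu_def
    by (rule emeasure_PiM_emb) (auto intro: prob_space_measure_pmf)
  also have "\<dots> = (\<Prod>i<n. ennreal (1/2))"
    by (simp add: emeasure_pmf_single)
  also have "\<dots> = ennreal ((1/2)^n)"
    by (subst prod_ennreal) auto
  finally show ?thesis .
qed

lemma measure_cyl_pos: "0 < measure mu (cyl n x)"
  by (simp add: measure_def emeasure_cyl)

lemma topspace_OmegaTop [simp]: "topspace OmegaTop = UNIV"
  by (simp add: OmegaTop_def)

lemma openin_OmegaTop_cyl: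
  assumes "openin OmegaTop S" "x \<in> S"
  obtains n where "cyl n x \<subseteq> S"
proof -
  obtain U where U: "finite {i. U i \<noteq> UNIV}" "x \<in> Pi\<^sub>E UNIV U" "Pi\<^sub>E UNIV U \<subseteq> S"
    using assms unfolding OmegaTop_def openin_product_topology_alt by auto
  obtain n where n: "{i. U i \<noteq> UNIV} \<subseteq> {..<n}"
    using U(1) finite_nat_bounded by blast
  have "y i \<in> U i" if "y \<in> cyl n x" for y i
  proof (cases "i < n")
    case True
    then show ?thesis
      using that U(2) by (auto simp: cyl_def)
  next
    case False
    then have "U i = UNIV"
      using n by auto
    then show ?thesis
      by simp
  qed
  then have "cyl n x \<subseteq> Pi\<^sub>E UNIV U"
    by (simp add: subset_iff PiE_iff)
  then show ?thesis
    using U(3) that by (meson order_trans)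
qed

lemma continuous_map_OmegaTop_cyl:
  assumes "continuous_map OmegaTop euclideanreal f" "0 < e"
  obtains n where "\<And>y. y \<in> cyl n x \<Longrightarrow> \<bar>f y - f x\<bar> < e"
proof -
  have "openin OmegaTop (f -` ball (f x) e)"
    using openin_continuous_map_preimage[OF assms(1), of "ball (f x) e"] by (simp add: vimage_def)
  moreover have "x \<in> f -` ball (f x) e"
    using assms(2) by simp
  ultimately obtain n where "cyl n x \<subseteq> f -` ball (f x) e"
    by (rule openin_OmegaTop_cyl)
  then show ?thesis
    by (intro that) (auto simp: dist_real_def abs_minus_commute)
qed

lemma continuous_map_OmegaTop_measurable:
  assumes "continuous_map OmegaTop euclideanreal f"
  shows "f \<in> borel_measurable mu"
proof (rule borel_measurableI)
  fix T :: "real set"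
  assume "open T"
  then have open_preimage: "openin OmegaTop (f -` T)"
    using openin_continuous_map_preimage[OF assms, of T] by (simp add: vimage_def)
  define C where "C l = cyl (length l) ((!) l)" for l :: "bool list"
  have "f -` T = (\<Union>l\<in>{l. C l \<subseteq> f -` T}. C l)"
  proof (intro equalityI subsetI)
    fix x
    assume "x \<in> f -` T"
    then obtain n where "cyl n x \<subseteq> f -` T"
      using open_preimage openin_OmegaTop_cyl by blast
    moreover have "C (map x [0..<n]) = cyl n x"
      by (auto simp: C_def cyl_def)
    ultimately show "x \<in> (\<Union>l\<in>{l. C l \<subseteq> f -` T}. C l)"
      by (intro UN_I[of "map x [0..<n]"]) (auto simp: cyl_def)
  qed blast
  moreover have "(\<Union>l\<in>{l. C l \<subseteq> f -` T}. C l) \<in> sets mu"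
    by (intro sets.countable_UN) (auto simp: C_def)
  ultimately show "f -` T \<inter> space mu \<in> sets mu"
    by simp
qed

lemma continuous_map_OmegaTop_bounded:
  assumes "continuous_map OmegaTop euclideanreal f"
  obtains B where "\<And>x. \<bar>f x\<bar> \<le> B"
proof -
  have "compact_space OmegaTop"
    by (simp add: OmegaTop_def compact_space_product_topology compact_space_discrete_topology)
  then have "compact (range f)"
    using image_compactin[OF _ assms] by (simp add: compact_space_def)
  then have "bounded (range f)"
    by (rule compact_imp_bounded)
  then obtain B where "\<And>y. y \<in> range f \<Longrightarrow> \<bar>y\<bar> \<le> B"
    unfolding bounded_real by blast
  then show ?thesis
    using that by blast
qed

lemma continuous_map_cons_sym: "continuous_map OmegaTop OmegaTop (cons_sym a)"
  unfolding OmegaTop_def continuous_map_componentwise_UNIV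
proof (intro allI)
  fix k
  show "continuous_map (product_topology (\<lambda>_. discrete_topology UNIV) UNIV)
      (discrete_topology UNIV) (\<lambda>x. cons_sym a x k)"
    by (cases k) (auto simp: cons_sym_def intro: continuous_map_product_projection)
qed

lemma continuous_map_Ruelle:
  assumes "continuous_map OmegaTop euclideanreal f"
  shows "continuous_map OmegaTop euclideanreal (Ruelle f)"
proof -
  have "continuous_map OmegaTop euclideanreal (\<lambda>x. f (cons_sym a x))" for a
    using continuous_map_compose[OF continuous_map_cons_sym assms] by (simp add: o_def)
  then show ?thesis
    unfolding Ruelle_def[abs_def]
    by (intro continuous_map_real_divide continuous_map_add) auto
qed

lemma L2norm_nonneg: "0 \<le> L2norm p"
  by (simp add: L2norm_def)

lemma L2norm_sq_eq_nn_integral: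
  assumes [measurable]: "p \<in> borel_measurable mu"
  shows "(L2norm p)\<^sup>2 = enn2real (\<integral>\<^sup>+x. ennreal ((cmod (p x))\<^sup>2) \<partial>mu)"
  unfolding L2norm_def
  by (subst integral_eq_nn_integral) (auto simp: enn2real_nonneg)

lemma nn_integral_eq_L2norm_sq:
  assumes "p \<in> L2"
  shows "(\<integral>\<^sup>+x. ennreal ((cmod (p x))\<^sup>2) \<partial>mu) = ennreal ((L2norm p)\<^sup>2)"
proof -
  have "integrable mu (\<lambda>x. (cmod (p x))\<^sup>2)"
    using assms by (simp add: L2_def)
  moreover have "(L2norm p)\<^sup>2 = (\<integral>x. (cmod (p x))\<^sup>2 \<partial>mu)"
    by (simp add: L2norm_def integral_nonneg_AE)
  ultimately show ?thesis
    by (simp add: nn_integral_eq_integral)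
qed

lemma L2norm_sq_le:
  assumes [measurable]: "p \<in> borel_measurable mu"
    and le: "\<And>x. (cmod (p x))\<^sup>2 \<le> w x"
    and w: "(\<integral>\<^sup>+x. ennreal (w x) \<partial>mu) = ennreal r" "0 \<le> r"
  shows "(L2norm p)\<^sup>2 \<le> r"
proof -
  have "(\<integral>\<^sup>+x. ennreal ((cmod (p x))\<^sup>2) \<partial>mu) \<le> ennreal r"
    unfolding w(1)[symmetric] by (intro nn_integral_mono ennreal_leI le)
  then show ?thesis
    using enn2real_mono[of _ "ennreal r"] w(2) by (simp add: L2norm_sq_eq_nn_integral)
qed

lemma L2norm_Koop:
  assumes "p \<in> L2"
  shows "Koop p \<in> L2" "L2norm (Koop p) = L2norm p"
proof -
  have [measurable]: "p \<in> borel_measurable mu"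
    using assms by (simp add: L2_def)
  have nn: "(\<integral>\<^sup>+x. ennreal ((cmod (Koop p x))\<^sup>2) \<partial>mu) = ennreal ((L2norm p)\<^sup>2)"
    unfolding Koop_def o_def
    by (subst nn_integral_mu_shift) (simp_all add: nn_integral_eq_L2norm_sq assms)
  then show "Koop p \<in> L2"
    by (auto simp: L2_def Koop_def integrable_iff_bounded)
  show "L2norm (Koop p) = L2norm p"
    using nn L2norm_nonneg[of p] L2norm_nonneg[of "Koop p"]
    by (subst power2_eq_iff_nonneg[symmetric]) (simp_all add: L2norm_sq_eq_nn_integral Koop_def)
qed

lemma measurable_Ruelle [measurable]:
  fixes g :: "omega \<Rightarrow> real"
  assumes [measurable]: "g \<in> borel_measurable mu"
  shows "Ruelle g \<in> borel_measurable mu"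
  unfolding Ruelle_def[abs_def] by measurable

lemma cmod_Ruelle_weighted_sq_le:
  fixes a :: "omega \<Rightarrow> real" and p :: "omega \<Rightarrow> complex"
  assumes "\<bar>a (cons_sym False x)\<bar> \<le> S" "\<bar>a (cons_sym True x)\<bar> \<le> S"
  shows "(cmod (Ruelle (\<lambda>y. of_real (a y) * p y) x))\<^sup>2 \<le> S\<^sup>2 * Ruelle (\<lambda>y. (cmod (p y))\<^sup>2) x"
proof -
  define u w where "u = cmod (p (cons_sym False x))" and "w = cmod (p (cons_sym True x))"
  have "cmod (Ruelle (\<lambda>y. of_real (a y) * p y) x)
      \<le> (\<bar>a (cons_sym False x)\<bar> * u + \<bar>a (cons_sym True x)\<bar> * w) / 2"
    using norm_triangle_ineq[of "of_real (a (cons_sym False x)) * p (cons_sym False x)"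
        "of_real (a (cons_sym True x)) * p (cons_sym True x)"]
    by (simp add: Ruelle_def u_def w_def norm_mult norm_divide)
  also have "\<dots> \<le> S * ((u + w) / 2)"
    using assms mult_right_mono[OF assms(1), of u] mult_right_mono[OF assms(2), of w]
    by (simp add: u_def w_def field_simps)
  finally have "(cmod (Ruelle (\<lambda>y. of_real (a y) * p y) x))\<^sup>2 \<le> S\<^sup>2 * ((u + w) / 2)\<^sup>2"
    by (metis norm_ge_zero power_mono power_mult_distrib)
  also have "\<dots> \<le> S\<^sup>2 * ((u\<^sup>2 + w\<^sup>2) / 2)"
    using sum_squares_ge_zero[of "u - w" 0] by (intro mult_left_mono) (simp_all add: power2_eq_square field_simps)
  finally show ?thesis
    by (simp add: Ruelle_def u_def w_def)
qed

lemma L2norm_Koop_commutator_le: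
  assumes [measurable]: "f \<in> borel_measurable mu"
    and p: "p \<in> L2" and bound: "\<And>x. \<bar>f (shift x) - f x\<bar> \<le> S"
  shows "L2norm (\<lambda>x. of_real (f (shift x) - f x) * p (shift x)) \<le> S * L2norm p"
proof (rule power2_le_imp_le)
  have [measurable]: "p \<in> borel_measurable mu"
    using p by (simp add: L2_def)
  have "0 \<le> S"
    using bound[of undefined] by linarith
  then show "0 \<le> S * L2norm p"
    by (simp add: L2norm_nonneg)
  have cmod_sq: "(cmod (of_real r * z))\<^sup>2 = r\<^sup>2 * (cmod z)\<^sup>2" for r z
    by (simp add: norm_mult power_mult_distrib)
  have "(cmod (of_real (f (shift x) - f x) * p (shift x)))\<^sup>2 \<le> S\<^sup>2 * (cmod (p (shift x)))\<^sup>2" for x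
    unfolding cmod_sq using power_mono[OF bound[of x] abs_ge_zero, of 2]
    by (intro mult_right_mono) simp_all
  moreover have "(\<integral>\<^sup>+x. ennreal (S\<^sup>2 * (cmod (p (shift x)))\<^sup>2) \<partial>mu) = ennreal ((S * L2norm p)\<^sup>2)"
  proof -
    have "(\<integral>\<^sup>+x. ennreal (S\<^sup>2 * (cmod (p (shift x)))\<^sup>2) \<partial>mu)
        = ennreal (S\<^sup>2) * (\<integral>\<^sup>+x. ennreal ((cmod (p (shift x)))\<^sup>2) \<partial>mu)"
      by (simp add: ennreal_mult nn_integral_cmult)
    also have "\<dots> = ennreal ((S * L2norm p)\<^sup>2)"
      using nn_integral_mu_shift[of "\<lambda>y. ennreal ((cmod (p y))\<^sup>2)"]
      by (simp add: nn_integral_eq_L2norm_sq p ennreal_mult power_mult_distrib)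
    finally show ?thesis .
  qed
  ultimately show "(L2norm (\<lambda>x. of_real (f (shift x) - f x) * p (shift x)))\<^sup>2 \<le> (S * L2norm p)\<^sup>2"
    by (intro L2norm_sq_le) simp_all
qed

lemma L2norm_Ruelle_commutator_le:
  assumes [measurable]: "f \<in> borel_measurable mu"
    and p: "p \<in> L2" and bound: "\<And>x. \<bar>f (shift x) - f x\<bar> \<le> S"
  shows "L2norm (\<lambda>x. Ruelle (\<lambda>y. of_real (f y - f x) * p y) x) \<le> S * L2norm p"
proof (rule power2_le_imp_le)
  have [measurable]: "p \<in> borel_measurable mu"
    using p by (simp add: L2_def)
  have "0 \<le> S"
    using bound[of undefined] by linarith
  then show "0 \<le> S * L2norm p"
    by (simp add: L2norm_nonneg)
  have "\<bar>f (cons_sym a x) - f x\<bar> \<le> S" for a x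
    using bound[of "cons_sym a x"] by (simp add: abs_minus_commute)
  then have "(cmod (Ruelle (\<lambda>y. of_real (f y - f x) * p y) x))\<^sup>2
      \<le> S\<^sup>2 * Ruelle (\<lambda>y. (cmod (p y))\<^sup>2) x" for x
    by (intro cmod_Ruelle_weighted_sq_le)
  moreover have "(\<integral>\<^sup>+x. ennreal (S\<^sup>2 * Ruelle (\<lambda>y. (cmod (p y))\<^sup>2) x) \<partial>mu)
      = ennreal ((S * L2norm p)\<^sup>2)"
  proof -
    have "0 \<le> Ruelle (\<lambda>y. (cmod (p y))\<^sup>2) x" for x
      by (simp add: Ruelle_def)
    then have "(\<integral>\<^sup>+x. ennreal (S\<^sup>2 * Ruelle (\<lambda>y. (cmod (p y))\<^sup>2) x) \<partial>mu)
        = ennreal (S\<^sup>2) * (\<integral>\<^sup>+x. ennreal (Ruelle (\<lambda>y. (cmod (p y))\<^sup>2) x) \<partial>mu)"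
      by (simp add: ennreal_mult nn_integral_cmult)
    also have "\<dots> = ennreal ((S * L2norm p)\<^sup>2)"
      by (simp add: nn_integral_mu_Ruelle nn_integral_eq_L2norm_sq p ennreal_mult power_mult_distrib)
    finally show ?thesis .
  qed
  moreover have "(\<lambda>x. Ruelle (\<lambda>y. of_real (f y - f x) * p y) x) \<in> borel_measurable mu"
    unfolding Ruelle_def by measurable
  ultimately show "(L2norm (\<lambda>x. Ruelle (\<lambda>y. of_real (f y - f x) * p y) x))\<^sup>2 \<le> (S * L2norm p)\<^sup>2"
    by (intro L2norm_sq_le) simp_all
qed

lemma commut_Dirac_Mult:
  "commut Dirac (piop (Mult f)) (p, q) =
    (\<lambda>x. of_real (f (shift x) - f x) * q (shift x),
     \<lambda>x. Ruelle (\<lambda>y. of_real (f y - f x) * p y) x)"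
  by (simp add: commut_def Dirac_def piop_def Mult_def Koop_def Ruelle_def fun_eq_iff field_simps)

lemma commut_Dirac_Mult_Koop:
  "commut Dirac (piop (Mult f)) (Koop p, \<lambda>_. 0) = (\<lambda>_. 0, Mult (\<lambda>x. Ruelle f x - f x) p)"
  by (simp add: commut_Dirac_Mult Mult_def Koop_def Ruelle_def fun_eq_iff field_simps)

lemma Hnorm_commut_Dirac_Mult_le:
  assumes "f \<in> borel_measurable mu" and bound: "\<And>x. \<bar>f (shift x) - f x\<bar> \<le> S"
    and "v \<in> Hspace"
  shows "Hnorm (commut Dirac (piop (Mult f)) v) \<le> S * Hnorm v"
proof -
  obtain p q where v: "v = (p, q)" "p \<in> L2" "q \<in> L2"
    using assms(3) by (cases v) (simp add: Hspace_def)
  have "0 \<le> S"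
    using bound[of undefined] by linarith
  let ?K = "L2norm (\<lambda>x. of_real (f (shift x) - f x) * q (shift x))"
  let ?R = "L2norm (\<lambda>x. Ruelle (\<lambda>y. of_real (f y - f x) * p y) x)"
  have "?K\<^sup>2 \<le> (S * L2norm q)\<^sup>2" "?R\<^sup>2 \<le> (S * L2norm p)\<^sup>2"
    using L2norm_Koop_commutator_le[OF assms(1) v(3) bound]
      L2norm_Ruelle_commutator_le[OF assms(1) v(2) bound]
    by (simp_all add: power_mono L2norm_nonneg)
  then have "sqrt (?K\<^sup>2 + ?R\<^sup>2) \<le> sqrt (S\<^sup>2 * ((L2norm p)\<^sup>2 + (L2norm q)\<^sup>2))"
    by (intro real_sqrt_le_mono) (simp add: power_mult_distrib algebra_simps)
  also have "\<dots> = S * Hnorm v"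
    using \<open>0 \<le> S\<close> by (simp add: v Hnorm_def real_sqrt_mult)
  finally show ?thesis
    by (simp add: v commut_Dirac_Mult Hnorm_def)
qed

lemma zero_in_Hspace: "(\<lambda>_. 0, \<lambda>_. 0) \<in> Hspace"
  by (simp add: Hspace_def L2_def)

lemma Hnorm_zero: "Hnorm (\<lambda>_. 0, \<lambda>_. 0) = 0"
  by (simp add: Hnorm_def L2norm_def)

lemma opnorm_le:
  assumes "0 \<le> S" and bounded: "\<And>v. v \<in> Hspace \<Longrightarrow> Hnorm (T v) \<le> S * Hnorm v"
  shows "opnorm T \<le> S"
proof -
  have "(\<lambda>_. 0, \<lambda>_. 0) \<in> {v \<in> Hspace. Hnorm v \<le> 1}"
    using zero_in_Hspace Hnorm_zero by simp
  moreover have "Hnorm (T v) \<le> S" if "v \<in> Hspace" "Hnorm v \<le> 1" for v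
    using bounded[OF that(1)] mult_left_mono[OF that(2) \<open>0 \<le> S\<close>] by simp
  ultimately show ?thesis
    unfolding opnorm_def by (intro cSUP_least) auto
qed

lemma Hnorm_le_opnorm:
  assumes "0 \<le> S" and bounded: "\<And>v. v \<in> Hspace \<Longrightarrow> Hnorm (T v) \<le> S * Hnorm v"
    and "v \<in> Hspace" "Hnorm v \<le> 1"
  shows "Hnorm (T v) \<le> opnorm T"
proof -
  have "Hnorm (T w) \<le> S" if "w \<in> Hspace" "Hnorm w \<le> 1" for w
    using bounded[OF that(1)] mult_left_mono[OF that(2) \<open>0 \<le> S\<close>] by simp
  then show ?thesis
    unfolding opnorm_def using assms(3,4) by (intro cSUP_upper bdd_aboveI[of _ S]) auto
qed

lemma L2_unit_vector_supported_on:
  assumes [measurable]: "C \<in> sets mu" and pos: "0 < measure mu C"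
  obtains u where "u \<in> L2" "L2norm u = 1" "\<And>x. u x \<noteq> 0 \<Longrightarrow> x \<in> C"
proof -
  interpret prob_space mu
    by (rule prob_space_mu)
  define u where "u x = complex_of_real (indicator C x / sqrt (measure mu C))" for x
  have sq: "(cmod (u x))\<^sup>2 = indicator C x / measure mu C" for x
    unfolding u_def norm_of_real power2_abs using pos by (simp add: indicator_def power_divide)
  have "integrable mu (\<lambda>x. (cmod (u x))\<^sup>2)"
    unfolding sq
    by (intro integrable_divide_zero integrable_real_indicator) (simp_all add: less_top[symmetric])
  moreover have "u \<in> borel_measurable mu"
    by (simp add: u_def[abs_def])
  ultimately have "u \<in> L2"
    by (simp add: L2_def)
  moreover have "(\<integral>x. indicator C x / measure mu C \<partial>mu) = 1"
    using pos by simp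
  then have "L2norm u = 1"
    by (simp add: L2norm_def sq)
  moreover have "x \<in> C" if "u x \<noteq> 0" for x
    using that by (auto simp: u_def indicator_def split: if_splits)
  ultimately show ?thesis
    by (rule that)
qed

lemma L2norm_Mult_ge:
  assumes u: "u \<in> L2" and [measurable]: "h \<in> borel_measurable mu"
    and bounded: "\<And>x. \<bar>h x\<bar> \<le> B" and large: "\<And>x. u x \<noteq> 0 \<Longrightarrow> q \<le> \<bar>h x\<bar>" and "0 \<le> q"
  shows "q * L2norm u \<le> L2norm (Mult h u)"
proof -
  have [measurable]: "u \<in> borel_measurable mu" and int_u: "integrable mu (\<lambda>x. (cmod (u x))\<^sup>2)"
    using u by (simp_all add: L2_def)
  have sq: "(cmod (Mult h u x))\<^sup>2 = (h x)\<^sup>2 * (cmod (u x))\<^sup>2" for x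
    by (simp add: Mult_def norm_mult power_mult_distrib)
  have "integrable mu (\<lambda>x. B\<^sup>2 * (cmod (u x))\<^sup>2)"
    using int_u by simp
  then have "integrable mu (\<lambda>x. (cmod (Mult h u x))\<^sup>2)"
  proof (rule Bochner_Integration.integrable_bound)
    show "AE x in mu. norm ((cmod (Mult h u x))\<^sup>2) \<le> norm (B\<^sup>2 * (cmod (u x))\<^sup>2)"
      using bounded power_mono[OF bounded abs_ge_zero, of _ 2]
      by (auto simp: sq intro!: mult_right_mono)
  qed (simp add: Mult_def)
  moreover have "q\<^sup>2 * (cmod (u x))\<^sup>2 \<le> (cmod (Mult h u x))\<^sup>2" for x
    using large[of x] power_mono[of q "\<bar>h x\<bar>" 2] \<open>0 \<le> q\<close>
    by (cases "u x = 0") (auto simp: sq intro!: mult_right_mono)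
  ultimately have "q\<^sup>2 * (\<integral>x. (cmod (u x))\<^sup>2 \<partial>mu) \<le> (\<integral>x. (cmod (Mult h u x))\<^sup>2 \<partial>mu)"
    using int_u by (subst integral_mult_right_zero[symmetric]) (intro integral_mono; simp)
  then have "sqrt (q\<^sup>2 * (\<integral>x. (cmod (u x))\<^sup>2 \<partial>mu)) \<le> L2norm (Mult h u)"
    unfolding L2norm_def by (rule real_sqrt_le_mono)
  then show ?thesis
    using \<open>0 \<le> q\<close> by (simp add: L2norm_def real_sqrt_mult)
qed

lemma le_opnorm_commut_Dirac_Mult:
  assumes fc: "continuous_map OmegaTop euclideanreal f"
    and bound: "\<And>x. \<bar>f (shift x) - f x\<bar> \<le> S"
    and [measurable]: "C \<in> sets mu" and pos: "0 < measure mu C"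
    and large: "\<And>x. x \<in> C \<Longrightarrow> q \<le> \<bar>Ruelle f x - f x\<bar>"
  shows "q \<le> opnorm (commut Dirac (piop (Mult f)))"
proof -
  let ?T = "commut Dirac (piop (Mult f))"
  let ?h = "\<lambda>x. Ruelle f x - f x"
  obtain u where u: "u \<in> L2" "L2norm u = 1" "\<And>x. u x \<noteq> 0 \<Longrightarrow> x \<in> C"
    using L2_unit_vector_supported_on[OF assms(3,4)] by blast
  have [measurable]: "f \<in> borel_measurable mu"
    using fc by (rule continuous_map_OmegaTop_measurable)
  obtain B where B: "\<And>x. \<bar>?h x\<bar> \<le> B"
    using continuous_map_OmegaTop_bounded[OF continuous_map_diff[OF continuous_map_Ruelle[OF fc] fc]]
    by blast
  have "max 0 q * L2norm u \<le> L2norm (Mult ?h u)"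
    using large u(3) by (intro L2norm_Mult_ge[OF u(1) _ B]) auto
  also have "\<dots> = Hnorm (?T (Koop u, \<lambda>_. 0))"
    by (simp add: commut_Dirac_Mult_Koop Hnorm_def L2norm_def L2norm_nonneg)
  also have "\<dots> \<le> opnorm ?T"
  proof (rule Hnorm_le_opnorm)
    show "0 \<le> S"
      using bound[of undefined] by linarith
    show "Hnorm (?T v) \<le> S * Hnorm v" if "v \<in> Hspace" for v
      by (rule Hnorm_commut_Dirac_Mult_le[of f S, OF _ bound that]) simp
    show "(Koop u, \<lambda>_. 0) \<in> Hspace" "Hnorm (Koop u, \<lambda>_. 0) \<le> 1"
      using L2norm_Koop[OF u(1)] u(2) by (simp_all add: Hspace_def L2_def Hnorm_def L2norm_def)
  qed
  finally show ?thesis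
    using u(2) by simp
qed

lemma opnorm_commut_Dirac_Mult_le:
  assumes "f \<in> borel_measurable mu" and bound: "\<And>x. \<bar>f (shift x) - f x\<bar> \<le> S"
  shows "opnorm (commut Dirac (piop (Mult f))) \<le> S"
proof (rule opnorm_le)
  show "0 \<le> S"
    using bound[of undefined] by linarith
qed (rule Hnorm_commut_Dirac_Mult_le[OF assms])

lemma abs_Ruelle_diff_le_opnorm:
  assumes fc: "continuous_map OmegaTop euclideanreal f"
    and bound: "\<And>x. \<bar>f (shift x) - f x\<bar> \<le> S"
  shows "\<bar>f x - Ruelle f x\<bar> \<le> opnorm (commut Dirac (piop (Mult f)))"
proof (rule field_le_epsilon)
  fix e :: real
  assume "0 < e"
  let ?h = "\<lambda>y. Ruelle f y - f y"
  obtain n where near: "\<And>y. y \<in> cyl n x \<Longrightarrow> \<bar>?h y - ?h x\<bar> < e"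
    using continuous_map_OmegaTop_cyl[OF continuous_map_diff[OF continuous_map_Ruelle[OF fc] fc] \<open>0 < e\<close>]
    by blast
  have "\<bar>?h x\<bar> - e \<le> \<bar>?h y\<bar>" if "y \<in> cyl n x" for y
    using near[OF that] abs_triangle_ineq2[of "?h x" "?h y"] abs_minus_commute[of "?h x" "?h y"]
    by linarith
  then have "\<bar>?h x\<bar> - e \<le> opnorm (commut Dirac (piop (Mult f)))"
    by (intro le_opnorm_commut_Dirac_Mult[OF fc bound sets_cyl measure_cyl_pos])
  then show "\<bar>f x - Ruelle f x\<bar> \<le> opnorm (commut Dirac (piop (Mult f))) + e"
    by (simp add: abs_minus_commute)
qed

lemma abs_le_supn:
  assumes "\<And>x. \<bar>g x\<bar> \<le> B"
  shows "\<bar>g x\<bar> \<le> supn g"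
  unfolding supn_def by (rule cSUP_upper) (auto intro: bdd_aboveI2 assms)

lemma supn_le:
  assumes "\<And>x. \<bar>g x\<bar> \<le> S"
  shows "supn g \<le> S"
  unfolding supn_def by (rule cSUP_least) (auto intro: assms)

lemma supn_Koop: "supn (Koop g) = supn g"
proof -
  have "range (\<lambda>x. \<bar>Koop g x\<bar>) = (\<lambda>x. \<bar>g x\<bar>) ` range shift"
    by (simp add: Koop_def image_image)
  also have "range shift = UNIV"
    using surjI[of shift "cons_sym False"] by simp
  finally show ?thesis
    by (simp add: supn_def)
qed

lemma Ruelle_shift_eq:
  fixes f :: "omega \<Rightarrow> 'a::field_char_0"
  assumes "\<forall>x y. (\<forall>i\<ge>1. x i = y i) \<longrightarrow> f x = f y"
  shows "Ruelle f (shift x) = f x"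
proof -
  have "f (cons_sym a (shift x)) = f x" for a
    by (intro assms[rule_format]) (auto simp: cons_sym_def shift_def split: nat.split)
  then show ?thesis
    by (simp add: Ruelle_def)
qed

theorem theorem2p10:
  fixes f :: "omega \<Rightarrow> real"
  assumes "continuous_map OmegaTop euclideanreal f"
  shows "supn (\<lambda>x. f x - f (shift x)) = supn (\<lambda>x. Koop f x - f x)
       \<and> supn (\<lambda>x. Koop f x - f x) \<ge> opnorm (commut Dirac (piop (Mult f)))
       \<and> opnorm (commut Dirac (piop (Mult f))) \<ge> supn (\<lambda>x. f x - Ruelle f x)
       \<and> ((\<forall>x y. (\<forall>i\<ge>1. x i = y i) \<longrightarrow> f x = f y) \<longrightarrow>
            supn (\<lambda>x. Koop f x - f x) = opnorm (commut Dirac (piop (Mult f)))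
          \<and> opnorm (commut Dirac (piop (Mult f))) = supn (\<lambda>x. f x - Ruelle f x))"
proof -
  define S where "S = supn (\<lambda>x. Koop f x - f x)"
  obtain B where B: "\<And>x. \<bar>f x\<bar> \<le> B"
    using continuous_map_OmegaTop_bounded[OF assms] by blast
  have Koop_bound: "\<bar>Koop f x - f x\<bar> \<le> 2 * B" for x
    using B[of x] B[of "shift x"] abs_triangle_ineq4[of "f (shift x)" "f x"]
    unfolding Koop_def o_def by linarith
  have bound: "\<bar>f (shift x) - f x\<bar> \<le> S" for x
    using abs_le_supn[OF Koop_bound] by (simp add: S_def Koop_def)
  have "supn (\<lambda>x. f x - f (shift x)) = S"
    by (simp add: S_def supn_def Koop_def abs_minus_commute)
  moreover have "opnorm (commut Dirac (piop (Mult f))) \<le> S"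
    using continuous_map_OmegaTop_measurable[OF assms] bound by (rule opnorm_commut_Dirac_Mult_le)
  moreover have "supn (\<lambda>x. f x - Ruelle f x) \<le> opnorm (commut Dirac (piop (Mult f)))"
    by (intro supn_le abs_Ruelle_diff_le_opnorm[OF assms bound])
  moreover have "S = supn (\<lambda>x. f x - Ruelle f x)" if "\<forall>x y. (\<forall>i\<ge>1. x i = y i) \<longrightarrow> f x = f y"
  proof -
    have "(\<lambda>x. Koop f x - f x) = Koop (\<lambda>x. f x - Ruelle f x)"
      using Ruelle_shift_eq[OF that] by (simp add: fun_eq_iff Koop_def)
    then show ?thesis
      by (simp add: S_def supn_Koop)
  qed
  ultimately show ?thesis
    unfolding S_def[symmetric] by auto
qed

end
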